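(* Let $n>2k$, $k\ge t+3$, and let $\mathcal F\subseteq\binom{[n]}{k}$ be a maximal $t$-intersecting family with $\tau_t(\mathcal F)=t+2$ and $\tau_t(\mathcal T_t(\mathcal F))=t+2$. (i) If $t=1$, then $|\mathcal T_t(\mathcal F)|<(k-t)(k-t+1)+1$. (ii) If $t\ge 2$, then $|\mathcal T_t(\mathcal F)|\le\binom{t+4}{2}$, and if equality holds then $\mathcal T_t(\mathcal F)=\binom{Z}{t+2}$ for some $Z\in\binom{[n]}{t+4}$.
   Context: A family is $t$-intersecting if any two members meet in at least $t$ elements. A $t$-cover of a family $\mathcal G$ of subsets of $[n]$ is a set $S\subseteq[n]$ with $|S\cap G|\ge t$ for all $G\in\mathcal G$; $\tau_t(\mathcal G)$ is the minimum size of a $t$-cover, and $\mathcal T_t(\mathcal G)$ is the set of all $t$-covers of $\mathcal G$ of size $\tau_t(\mathcal G)$. A $t$-intersecting $\mathcal F\subseteq\binom{[n]}{k}$ is maximal if no $t$-intersecting subfamily of $\binom{[n]}{k}$ properly contains it. *)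

theory Defs
  imports Main
begin

definition ksets :: "nat set \<Rightarrow> nat \<Rightarrow> nat set set" where
  "ksets X k = {A. A \<subseteq> X \<and> card A = k}"

definition t_intersecting :: "nat \<Rightarrow> nat set set \<Rightarrow> bool" where
  "t_intersecting t F \<longleftrightarrow> (\<forall>A\<in>F. \<forall>B\<in>F. t \<le> card (A \<inter> B))"

definition maximal_t_intersecting :: "nat \<Rightarrow> nat \<Rightarrow> nat \<Rightarrow> nat set set \<Rightarrow> bool" where
  "maximal_t_intersecting n k t F \<longleftrightarrow>
     F \<subseteq> ksets {1..n} k \<and> t_intersecting t F \<and>
     (\<forall>G. F \<subset> G \<and> G \<subseteq> ksets {1..n} k \<longrightarrow> \<not> t_intersecting t G)"

definition t_cover :: "nat \<Rightarrow> nat \<Rightarrow> nat set set \<Rightarrow> nat set \<Rightarrow> bool" where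
  "t_cover n t G S \<longleftrightarrow> S \<subseteq> {1..n} \<and> (\<forall>A\<in>G. t \<le> card (S \<inter> A))"

definition tau :: "nat \<Rightarrow> nat \<Rightarrow> nat set set \<Rightarrow> nat" where
  "tau n t G = (LEAST m. \<exists>S. t_cover n t G S \<and> card S = m)"

definition Tcov :: "nat \<Rightarrow> nat \<Rightarrow> nat set set \<Rightarrow> nat set set" where
  "Tcov n t G = {S. t_cover n t G S \<and> card S = tau n t G}"

end

theory Submission
  imports Defs
begin

(* The family T of minimum t-covers is itself t-intersecting: a member S, padded with
   elements outside S \<union> S' to a k-set, lies in F by maximality (here n > 2k is used), and S'
   meets this k-set only in S \<inter> S'.  By tau_t(T) = t + 2 no (t+1)-set is a t-cover of T.
   Fix A in T.  Every other member arises from A by exchanging one element y for an outside z,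
   or a pair e of A for an outside pair D.  Comparing two members shows that exchanges of
   disjoint pairs use the same D, exchanges of pairs with one common point use meeting D's,
   and a one-exchange at y puts z into every pair exchange avoiding y; testing the (t+1)-sets
   A - {y} and insert v (A - e) against tau_t(T) bounds the exchanges through a point by 2.

   For t = 1 counting exchanges gives |T| <= 12.  For t >= 2, if the pairs of A that admit an
   exchange pairwise meet, they lie in a triangle of A, and either counting gives
   |T| <= 3t + 8 or all members contain the rest of A, whose removal reduces to t = 1.
   Otherwise two disjoint pairs admit only one exchange D0; then either T lies in the
   (t+4)-set A \<union> D0, or a further exchange creates a crossing configuration, for which
   counting again gives |T| <= 3t + 8 < C(t+4, 2). *)

lemma card_2_doubletonI:
  assumes "card D = 2" "x \<in> D" "y \<in> D" "x \<noteq> y"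
  shows "D = {x, y}"
proof -
  have "finite D" using assms(1) card.infinite by fastforce
  then show ?thesis using assms card_subset_eq[of D "{x, y}"] by simp
qed

lemma card_2_obtain_other:
  assumes "card D = 2" "x \<in> D"
  obtains y where "D = {x, y}" "y \<noteq> x"
proof -
  have "card (D - {x}) = 1" using assms by simp
  then obtain y where "D - {x} = {y}" by (rule card_1_singletonE)
  then show thesis using that assms(2) by blast
qed

lemma exists_disjoint_pairs_if_degree_le_2:
  assumes "finite X" "\<And>D. D \<in> X \<Longrightarrow> card D = 2"
    and "\<And>v. card {D \<in> X. v \<in> D} \<le> 2" and "4 \<le> card X"
  shows "\<exists>D1\<in>X. \<exists>D2\<in>X. D1 \<inter> D2 = {}"
proof (rule ccontr)
  assume no_disjoint: "\<not> ?thesis"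
  have "X \<noteq> {}" using assms(4) by auto
  then obtain D1 where D1: "D1 \<in> X" by blast
  obtain a b where ab: "D1 = {a, b}" using assms(2)[OF D1] card_2_iff by metis
  let ?Xa = "{D \<in> X. a \<in> D}" and ?Xb = "{D \<in> X. b \<in> D}"
  have "D \<inter> D1 \<noteq> {}" if "D \<in> X" for D using no_disjoint D1 that by blast
  then have "X \<subseteq> ?Xa \<union> ?Xb" using ab by blast
  then have "card X \<le> card (?Xa \<union> ?Xb)" using assms(1) by (simp add: card_mono)
  also have "\<dots> = card ?Xa + card ?Xb - card (?Xa \<inter> ?Xb)"
    using card_Un_Int[of ?Xa ?Xb] assms(1) by simp
  also have "\<dots> \<le> 3"
  proof -
    have "?Xa \<inter> ?Xb \<noteq> {}" "finite (?Xa \<inter> ?Xb)" using D1 ab assms(1) by auto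
    then have "card (?Xa \<inter> ?Xb) \<ge> 1" by (simp add: Suc_le_eq card_gt_0_iff)
    then show ?thesis using assms(3)[of a] assms(3)[of b] by linarith
  qed
  finally show False using assms(4) by simp
qed

lemma pair_eq_if_meets_cross_pairs:
  assumes "card D = 2" "card D1 = 2" "card D2 = 2"
    and "\<And>a b. a \<in> D1 \<Longrightarrow> b \<in> D2 \<Longrightarrow> D \<inter> {a, b} \<noteq> {}"
  shows "D = D1 \<or> D = D2"
proof -
  have "D1 \<subseteq> D \<or> D2 \<subseteq> D" using assms(4) by blast
  moreover have "finite D" using assms(1) card.infinite by fastforce
  ultimately show ?thesis using assms(1-3) card_subset_eq by metis
qed

lemma subset_cross_pairs_if_meets_disjoint_pairs:
  assumes "D1 \<inter> D2 = {}" "\<And>D. D \<in> Y \<Longrightarrow> card D = 2 \<and> D \<inter> D1 \<noteq> {} \<and> D \<inter> D2 \<noteq> {}"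
  shows "Y \<subseteq> (\<lambda>(a, b). {a, b}) ` (D1 \<times> D2)"
proof
  fix D assume D: "D \<in> Y"
  then obtain a b where "a \<in> D" "a \<in> D1" "b \<in> D" "b \<in> D2" using assms(2) by blast
  moreover have "a \<noteq> b" using calculation assms(1) by blast
  moreover have "card D = 2" using assms(2)[OF D] by blast
  ultimately have "D = {a, b}" using card_2_doubletonI by metis
  then show "D \<in> (\<lambda>(a, b). {a, b}) ` (D1 \<times> D2)" using \<open>a \<in> D1\<close> \<open>b \<in> D2\<close> by blast
qed

lemma card_union_pairs_eq_3:
  assumes "card e = 2" "card e' = 2" "e \<noteq> e'" "e \<inter> e' \<noteq> {}"
  shows "card (e \<union> e') = 3"
proof -
  have fin: "finite e" "finite e'" using assms(1,2) by (auto intro: card_ge_0_finite)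
  have "card (e \<inter> e') \<noteq> 2"
    using card_subset_eq[OF fin(1), of "e \<inter> e'"] card_subset_eq[OF fin(2), of "e \<inter> e'"] assms(1-3)
    by (metis Int_lower1 Int_lower2)
  moreover have "card (e \<inter> e') \<le> 2" using card_mono[OF fin(1), of "e \<inter> e'"] assms(1) by simp
  moreover have "card (e \<inter> e') \<noteq> 0" using assms(4) fin by simp
  ultimately show ?thesis using card_Un_Int[OF fin] assms(1,2) by simp
qed

lemma card_le_1_if_subset_singleton: "X \<subseteq> {a} \<Longrightarrow> card X \<le> 1"
  using card_mono[of "{a}" X] by simp

lemma card_add_le_3_if_all_equal:
  assumes "finite X" "finite Y" "card X \<le> 3" "card Y \<le> 3" "\<And>x y. x \<in> X \<Longrightarrow> y \<in> Y \<Longrightarrow> x = y"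
  shows "card X + card Y \<le> 3"
proof (cases "X = {} \<or> Y = {}")
  case False
  then obtain x y where "x \<in> X" "y \<in> Y" by blast
  then have "card X \<le> 1" "card Y \<le> 1"
    using assms(5) card_le_1_if_subset_singleton[of X y] card_le_1_if_subset_singleton[of Y x]
      by blast+
  then show ?thesis by simp
qed (use assms(3,4) in auto)

lemma pair_subset_if_meets_triangle:
  assumes "card e = 2" "p \<noteq> q" "q \<noteq> r" "p \<noteq> r"
    and "e \<inter> {p, q} \<noteq> {}" "e \<inter> {q, r} \<noteq> {}" "e \<inter> {p, r} \<noteq> {}"
  shows "e \<subseteq> {p, q, r}"
proof
  fix x assume x: "x \<in> e"
  obtain a b where ab: "e = {a, b}" using assms(1) by (auto simp: card_2_iff)
  show "x \<in> {p, q, r}" using x assms(2-7) unfolding ab by auto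
qed

lemma pair_eq_if_meets_two_pairs:
  assumes "card D = 2" "D \<inter> {a, b} \<noteq> {}" "D \<inter> {a, c} \<noteq> {}" "a \<notin> D" "b \<noteq> c"
  shows "D = {b, c}"
proof -
  have "b \<in> D" "c \<in> D" using assms(2-4) by blast+
  then show ?thesis using card_2_doubletonI[OF assms(1)] assms(5) by blast
qed

section \<open>Exchanges within a tight family\<close>

text \<open>The family of minimum t-covers in the theorem, with \<open>no_cover\<close> expressing that its
  t-covering number is t + 2.\<close>

locale tight_family =
  fixes G :: "'a set" and t :: nat and T :: "'a set set"
  assumes finite_ground: "finite G"
    and member_subset: "C \<in> T \<Longrightarrow> C \<subseteq> G"
    and member_card: "C \<in> T \<Longrightarrow> card C = t + 2"
    and intersecting: "C \<in> T \<Longrightarrow> C' \<in> T \<Longrightarrow> t \<le> card (C \<inter> C')"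
    and no_cover: "S \<subseteq> G \<Longrightarrow> card S = t + 1 \<Longrightarrow> \<exists>C\<in>T. card (S \<inter> C) < t"
    and t_pos: "0 < t"
begin

lemma finite_member: "C \<in> T \<Longrightarrow> finite C"
  using member_subset finite_ground finite_subset by blast

lemma card_diff_member_le_2:
  assumes "C \<in> T" "C' \<in> T"
  shows "card (C - C') \<le> 2"
  using intersecting[OF assms] member_card[OF assms(1)] finite_member[OF assms(1)]
  by (simp add: card_Diff_subset_Int)

lemma tight_family_remove_common_part:
  assumes common: "\<And>C. C \<in> T \<Longrightarrow> W \<subseteq> C" and "W \<subseteq> G" "card W = t - 1"
  shows "tight_family (G - W) 1 ((\<lambda>C. C - W) ` T)"
proof
  have finW: "finite W" using assms(2) finite_ground finite_subset by blast
  have card_diff: "card (X - W) = card X - (t - 1)" if "W \<subseteq> X" "finite X" for X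
    using that assms(3) by (simp add: card_Diff_subset finW)
  show "finite (G - W)" using finite_ground by simp
  show "C \<subseteq> G - W" if "C \<in> (\<lambda>C. C - W) ` T" for C
    using that member_subset by blast
  show "card C = 1 + 2" if "C \<in> (\<lambda>C. C - W) ` T" for C
    using that member_card common finite_member card_diff t_pos by auto
  show "1 \<le> card (C \<inter> C')" if CC': "C \<in> (\<lambda>C. C - W) ` T" "C' \<in> (\<lambda>C. C - W) ` T" for C C'
  proof -
    obtain X where X: "X \<in> T" "C = X - W" using CC'(1) by blast
    obtain X' where X': "X' \<in> T" "C' = X' - W" using CC'(2) by blast
    have "C \<inter> C' = (X \<inter> X') - W" using X X' by blast
    moreover have "card ((X \<inter> X') - W) = card (X \<inter> X') - (t - 1)"
      using card_diff common[OF X(1)] common[OF X'(1)] finite_member[OF X(1)] by simp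
    ultimately show ?thesis using intersecting[OF X(1) X'(1)] t_pos by simp
  qed
  show "\<exists>C\<in>(\<lambda>C. C - W) ` T. card (S \<inter> C) < 1" if S: "S \<subseteq> G - W" "card S = 1 + 1" for S
  proof -
    have finS: "finite S" using S(2) card.infinite by fastforce
    have "S \<inter> W = {}" "S \<union> W \<subseteq> G" using S(1) assms(2) by blast+
    moreover from this have "card (S \<union> W) = t + 1"
      using S(2) assms(3) t_pos finS finW by (simp add: card_Un_disjoint)
    ultimately obtain C where C: "C \<in> T" "card ((S \<union> W) \<inter> C) < t" using no_cover by blast
    have "(S \<union> W) \<inter> C = (S \<inter> (C - W)) \<union> W" "S \<inter> (C - W) \<inter> W = {}"
      using common[OF C(1)] S(1) by blast+
    then have "card ((S \<union> W) \<inter> C) = card (S \<inter> (C - W)) + (t - 1)"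
      using finS finW assms(3) by (simp add: card_Un_disjoint)
    then show ?thesis using C t_pos by force
  qed
qed simp

end

definition one_swaps :: "'a set set \<Rightarrow> 'a set \<Rightarrow> 'a \<Rightarrow> 'a set" where
  "one_swaps T A y = {z. z \<notin> A \<and> insert z (A - {y}) \<in> T}"

definition two_swaps :: "'a set set \<Rightarrow> 'a set \<Rightarrow> 'a set \<Rightarrow> 'a set set" where
  "two_swaps T A e = {D. card D = 2 \<and> D \<inter> A = {} \<and> (A - e) \<union> D \<in> T}"

locale tight_family_base = tight_family +
  fixes A :: "'a set"
  assumes base_member: "A \<in> T"
begin

abbreviation "swaps1 y \<equiv> one_swaps T A y"
abbreviation "swaps2 e \<equiv> two_swaps T A e"
abbreviation "base_pairs \<equiv> {e. e \<subseteq> A \<and> card e = 2}"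

lemma finite_base: "finite A" and card_base: "card A = t + 2" and base_subset: "A \<subseteq> G"
  using base_member finite_member member_card member_subset by auto

lemma card_base_diff: "e \<subseteq> A \<Longrightarrow> card (A - e) = t + 2 - card e"
  using finite_base card_base by (simp add: card_Diff_subset finite_subset)

lemma member_cases:
  assumes "C \<in> T"
  obtains "C = A"
  | y z where "y \<in> A" "z \<in> swaps1 y" "C = insert z (A - {y})"
  | e D where "e \<subseteq> A" "card e = 2" "D \<in> swaps2 e" "C = (A - e) \<union> D"
proof -
  have "card (C - A) = card (A - C)"
    using finite_member[OF assms] finite_base member_card[OF assms] card_base
    by (simp add: card_Diff_subset_Int Int_commute)
  moreover have "card (C - A) \<le> 2" using card_diff_member_le_2 assms base_member by blast
  ultimately consider "card (C - A) = 0" "card (A - C) = 0" | "card (C - A) = 1" "card (A - C) = 1"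
    | "card (C - A) = 2" "card (A - C) = 2" by linarith
  then show thesis
  proof cases
    case 1
    then show thesis using that(1) finite_member[OF assms] finite_base by auto
  next
    case 2
    then obtain z y where zy: "C - A = {z}" "A - C = {y}" by (meson card_1_singletonE)
    then have "C = insert z (A - {y})" by blast
    moreover have "y \<in> A" "z \<in> swaps1 y" using zy assms calculation unfolding one_swaps_def by auto
    ultimately show thesis using that(2) by blast
  next
    case 3
    have C: "C = (A - (A - C)) \<union> (C - A)" by blast
    then have "C - A \<in> swaps2 (A - C)" using 3 assms unfolding two_swaps_def by auto
    then show thesis using that(3) C 3 by blast
  qed
qed

lemma one_swapsD:
  assumes "z \<in> swaps1 y"
  shows "z \<notin> A" "insert z (A - {y}) \<in> T"
  using assms unfolding one_swaps_def by auto

lemma two_swapsD: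
  assumes "D \<in> swaps2 e"
  shows "card D = 2" "D \<inter> A = {}" "(A - e) \<union> D \<in> T" "finite D"
  using assms unfolding two_swaps_def by (auto intro: card_ge_0_finite)

lemma finite_one_swaps: "finite (swaps1 y)"
proof -
  have "swaps1 y \<subseteq> G" using member_subset unfolding one_swaps_def by blast
  then show ?thesis using finite_ground finite_subset by blast
qed

lemma finite_two_swaps: "finite (swaps2 e)"
proof -
  have "swaps2 e \<subseteq> Pow G" using member_subset unfolding two_swaps_def by blast
  then show ?thesis using finite_ground finite_subset by blast
qed

lemma finite_base_pairs: "finite base_pairs"
  using finite_base by (simp add: finite_subset[of _ "Pow A"] subset_eq)

lemma card_le_sum_swaps:
  "card T \<le> 1 + (\<Sum>y\<in>A. card (swaps1 y)) + (\<Sum>e\<in>base_pairs. card (swaps2 e))"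
proof -
  let ?Ones = "\<Union>y\<in>A. (\<lambda>z. insert z (A - {y})) ` swaps1 y"
  let ?Twos = "\<Union>e\<in>base_pairs. (\<lambda>D. (A - e) \<union> D) ` swaps2 e"
  have "T \<subseteq> {A} \<union> ?Ones \<union> ?Twos"
  proof
    fix C assume "C \<in> T"
    then show "C \<in> {A} \<union> ?Ones \<union> ?Twos" by (cases rule: member_cases) auto
  qed
  moreover have "finite ({A} \<union> ?Ones \<union> ?Twos)"
    using finite_base finite_base_pairs finite_one_swaps finite_two_swaps by simp
  ultimately have "card T \<le> card ({A} \<union> ?Ones \<union> ?Twos)" by (rule card_mono[rotated])
  also have "\<dots> \<le> 1 + card ?Ones + card ?Twos"
    using card_Un_le[of "{A} \<union> ?Ones" ?Twos] card_Un_le[of "{A}" ?Ones] by simp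
  also have "card ?Ones \<le> (\<Sum>y\<in>A. card ((\<lambda>z. insert z (A - {y})) ` swaps1 y))"
    by (rule card_UN_le[OF finite_base])
  also have "\<dots> \<le> (\<Sum>y\<in>A. card (swaps1 y))"
    by (intro sum_mono card_image_le finite_one_swaps)
  also have "card ?Twos \<le> (\<Sum>e\<in>base_pairs. card ((\<lambda>D. (A - e) \<union> D) ` swaps2 e))"
    by (rule card_UN_le[OF finite_base_pairs])
  also have "\<dots> \<le> (\<Sum>e\<in>base_pairs. card (swaps2 e))"
    by (intro sum_mono card_image_le finite_two_swaps)
  finally show ?thesis by simp
qed

lemma card_union_pairs_le_two_swaps_inter:
  assumes "D \<in> swaps2 e" "D' \<in> swaps2 e'" "e \<subseteq> A" "e' \<subseteq> A"
  shows "card (e \<union> e') \<le> 2 + card (D \<inter> D')"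
proof -
  have "((A - e) \<union> D) \<inter> ((A - e') \<union> D') = (A - (e \<union> e')) \<union> (D \<inter> D')"
    and "(A - (e \<union> e')) \<inter> (D \<inter> D') = {}"
    using two_swapsD(2)[OF assms(1)] two_swapsD(2)[OF assms(2)] by blast+
  then have "t \<le> card (A - (e \<union> e')) + card (D \<inter> D')"
    using intersecting[OF two_swapsD(3)[OF assms(1)] two_swapsD(3)[OF assms(2)]]
      finite_base two_swapsD(4)[OF assms(1)] by (simp add: card_Un_disjoint)
  moreover have "card (A - (e \<union> e')) = t + 2 - card (e \<union> e')"
    using card_base_diff assms(3,4) by simp
  moreover have "card (e \<union> e') \<le> t + 2"
    using card_mono[OF finite_base, of "e \<union> e'"] assms(3,4) card_base by simp
  ultimately show ?thesis by linarith
qed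

lemma two_swaps_eq_if_disjoint:
  assumes "D \<in> swaps2 e" "D' \<in> swaps2 e'" "e \<subseteq> A" "e' \<subseteq> A"
    and "card e = 2" "card e' = 2" "e \<inter> e' = {}"
  shows "D = D'"
proof -
  have "card (e \<union> e') = 4"
    using assms(5-7) card_Un_disjoint[of e e'] card_ge_0_finite by force
  then have "2 \<le> card (D \<inter> D')" using card_union_pairs_le_two_swaps_inter[OF assms(1-4)] by simp
  moreover note two_swapsD[OF assms(1)] two_swapsD[OF assms(2)]
  ultimately show ?thesis
    by (metis Int_lower1 Int_lower2 card_mono card_subset_eq le_antisym)
qed

lemma two_swaps_meet:
  assumes "D \<in> swaps2 e" "D' \<in> swaps2 e'" "e \<subseteq> A" "e' \<subseteq> A" "card (e \<union> e') = 3"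
  shows "D \<inter> D' \<noteq> {}"
  using card_union_pairs_le_two_swaps_inter[OF assms(1-4)] assms(5) by auto

lemma one_swap_mem_two_swap:
  assumes "z \<in> swaps1 y" "D \<in> swaps2 e" "e \<subseteq> A" "card e = 2" "y \<in> A" "y \<notin> e"
  shows "z \<in> D"
proof (rule ccontr)
  assume "z \<notin> D"
  then have "insert z (A - {y}) \<inter> ((A - e) \<union> D) = A - insert y e"
    using one_swapsD(1)[OF assms(1)] two_swapsD(2)[OF assms(2)] by blast
  moreover have "finite e" using assms(4) by (intro card_ge_0_finite) simp
  then have "card (insert y e) = 3" using assms(4,6) by simp
  then have "card (A - insert y e) = t - 1" using card_base_diff[of "insert y e"] assms(3,5) by simp
  ultimately show False
    using intersecting[OF one_swapsD(2)[OF assms(1)] two_swapsD(3)[OF assms(2)]] t_pos by simp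
qed

lemma card_extensions_outside_base_le_2:
  assumes "S \<subseteq> G" "card S = t + 1"
  shows "card {x. x \<notin> A \<and> insert x S \<in> T} \<le> 2"
proof -
  obtain C where C: "C \<in> T" "card (S \<inter> C) < t" using no_cover[OF assms] by blast
  have "x \<in> C" if "insert x S \<in> T" for x
  proof (rule ccontr)
    assume "x \<notin> C"
    then have "insert x S \<inter> C = S \<inter> C" by blast
    then show False using intersecting[OF that C(1)] C(2) by simp
  qed
  then have "{x. x \<notin> A \<and> insert x S \<in> T} \<subseteq> C - A" by blast
  then have "card {x. x \<notin> A \<and> insert x S \<in> T} \<le> card (C - A)"
    using finite_member[OF C(1)] by (simp add: card_mono)
  then show ?thesis using card_diff_member_le_2[OF C(1) base_member] by simp
qed

lemma card_one_swaps_le_2: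
  assumes "y \<in> A"
  shows "card (swaps1 y) \<le> 2"
proof -
  have "A - {y} \<subseteq> G" "card (A - {y}) = t + 1"
    using base_subset card_base finite_base assms by auto
  then show ?thesis
    using card_extensions_outside_base_le_2 unfolding one_swaps_def by simp
qed

lemma card_two_swaps_containing_le_2:
  assumes "e \<subseteq> A" "card e = 2"
  shows "card {D \<in> swaps2 e. v \<in> D} \<le> 2"
proof (cases "v \<in> G - A")
  case True
  let ?S = "insert v (A - e)"
  let ?X = "{x. x \<notin> A \<and> insert x ?S \<in> T}"
  have S: "?S \<subseteq> G" "card ?S = t + 1"
    using True base_subset card_base_diff[OF assms(1)] assms(2) finite_base by auto
  have "{D \<in> swaps2 e. v \<in> D} \<subseteq> (\<lambda>x. {v, x}) ` ?X"
  proof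
    fix D assume D: "D \<in> {D \<in> swaps2 e. v \<in> D}"
    then obtain x where x: "D = {v, x}" "x \<noteq> v"
      using two_swapsD(1) by (auto simp: card_2_iff doubleton_eq_iff)
    then have "x \<notin> A" "insert x ?S = (A - e) \<union> D" using D two_swapsD(2) by auto
    moreover have "(A - e) \<union> D \<in> T" using D two_swapsD(3) by blast
    ultimately show "D \<in> (\<lambda>x. {v, x}) ` ?X" using x(1) by simp
  qed
  moreover have "?X \<subseteq> G" using member_subset by blast
  then have finX: "finite ?X" using finite_ground finite_subset by blast
  ultimately have "card {D \<in> swaps2 e. v \<in> D} \<le> card ((\<lambda>x. {v, x}) ` ?X)"
    by (intro card_mono) simp_all
  also have "\<dots> \<le> card ?X" using finX by (rule card_image_le)
  also have "\<dots> \<le> 2" using card_extensions_outside_base_le_2[OF S] .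
  finally show ?thesis .
next
  case False
  have "v \<notin> D" if "D \<in> swaps2 e" for D
    using False member_subset[OF two_swapsD(3)[OF that]] two_swapsD(2)[OF that] by blast
  then have "{D \<in> swaps2 e. v \<in> D} = {}" by blast
  then show ?thesis by (metis card.empty zero_le)
qed

lemma exists_two_swap_avoiding:
  assumes "y \<in> A"
  obtains e where "e \<subseteq> A" "card e = 2" "y \<notin> e" "swaps2 e \<noteq> {}"
proof -
  have "A - {y} \<subseteq> G" "card (A - {y}) = t + 1"
    using base_subset card_base finite_base assms by auto
  then obtain C where C: "C \<in> T" "card ((A - {y}) \<inter> C) < t" using no_cover by blast
  have "y \<in> C"
  proof (rule ccontr)
    assume "y \<notin> C"
    then have "A \<inter> C = (A - {y}) \<inter> C" by blast
    then show False using intersecting[OF base_member C(1)] C(2) by simp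
  qed
  then have "A \<inter> C = insert y ((A - {y}) \<inter> C)" using assms by blast
  then have "card (A \<inter> C) = t"
    using intersecting[OF base_member C(1)] C(2) finite_base by simp
  then have card_e: "card (A - C) = 2" and "card (C - A) = 2"
    using card_base member_card[OF C(1)] finite_base finite_member[OF C(1)]
    by (simp_all add: card_Diff_subset_Int Int_commute)
  moreover have "(A - (A - C)) \<union> (C - A) = C" by blast
  ultimately have "C - A \<in> swaps2 (A - C)" using C(1) unfolding two_swaps_def by auto
  then show thesis using that[of "A - C"] card_e \<open>y \<in> C\<close> by blast
qed

subsection \<open>The case t = 1\<close>

context
  assumes t_eq_1: "t = 1"
begin

lemma card_base_eq_3: "card A = 3"
  using card_base t_eq_1 by simp

lemma base_pairs_eq_complements: "base_pairs = (\<lambda>y. A - {y}) ` A"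
proof (intro equalityI subsetI)
  fix e assume e: "e \<in> base_pairs"
  then have "card (A - e) = 1" using card_base_diff t_eq_1 by simp
  then obtain y where "A - e = {y}" by (rule card_1_singletonE)
  then show "e \<in> (\<lambda>y. A - {y}) ` A" using e by blast
qed (use finite_base card_base_eq_3 in auto)

lemma two_swaps_complement_nonempty:
  assumes "y \<in> A"
  shows "swaps2 (A - {y}) \<noteq> {}"
proof -
  obtain e where e: "e \<subseteq> A" "card e = 2" "y \<notin> e" "swaps2 e \<noteq> {}"
    by (rule exists_two_swap_avoiding[OF assms])
  then have "e \<in> (\<lambda>y. A - {y}) ` A" unfolding base_pairs_eq_complements[symmetric] by simp
  then obtain y' where y': "y' \<in> A" "e = A - {y'}" by blast
  then have "y' = y" using e(3) assms by blast
  then show ?thesis using e(4) y' by simp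
qed

lemma two_swaps_complements_meet:
  assumes "y \<in> A" "y' \<in> A" "y \<noteq> y'" "D \<in> swaps2 (A - {y})" "D' \<in> swaps2 (A - {y'})"
  shows "D \<inter> D' \<noteq> {}"
proof -
  have "(A - {y}) \<union> (A - {y'}) = A" using assms(1-3) by blast
  then show ?thesis using two_swaps_meet[OF assms(4,5)] card_base_eq_3 by auto
qed

lemma card_two_swaps_complement_le_4:
  assumes "y \<in> A"
  shows "card (swaps2 (A - {y})) \<le> 4"
proof -
  have pair: "A - {y} \<subseteq> A" "card (A - {y}) = 2" using assms card_base_eq_3 finite_base by auto
  then have "A - {y} \<noteq> {}" by (metis card.empty zero_neq_numeral)
  then obtain y' where y': "y' \<in> A" "y' \<noteq> y" by blast
  obtain D' where D': "D' \<in> swaps2 (A - {y'})" using two_swaps_complement_nonempty[OF y'(1)] by blast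
  obtain d1 d2 where "D' = {d1, d2}" using two_swapsD(1)[OF D'] by (auto simp: card_2_iff)
  then have "swaps2 (A - {y}) \<subseteq> {D \<in> swaps2 (A - {y}). d1 \<in> D} \<union> {D \<in> swaps2 (A - {y}). d2 \<in> D}"
    using two_swaps_complements_meet[OF assms y'(1) y'(2)[symmetric] _ D'] by blast
  then have "card (swaps2 (A - {y}))
      \<le> card ({D \<in> swaps2 (A - {y}). d1 \<in> D} \<union> {D \<in> swaps2 (A - {y}). d2 \<in> D})"
    using finite_two_swaps by (intro card_mono) auto
  also have "\<dots> \<le> card {D \<in> swaps2 (A - {y}). d1 \<in> D} + card {D \<in> swaps2 (A - {y}). d2 \<in> D}"
    by (rule card_Un_le)
  also have "\<dots> \<le> 4"
    using card_two_swaps_containing_le_2[OF pair, of d1] card_two_swaps_containing_le_2[OF pair, of d2]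
    by simp
  finally show ?thesis .
qed

lemma card_swaps_le_3_if_one_swap:
  assumes "y \<in> A" "swaps1 y \<noteq> {}"
  shows "card (swaps1 y) + card (swaps2 (A - {y})) \<le> 3"
proof -
  have pair: "A - {y} \<subseteq> A" "card (A - {y}) = 2" using assms card_base_eq_3 finite_base by auto
  have contains: "z \<in> D" if "z \<in> swaps1 y" "D \<in> swaps2 (A - {y})" for z D
    using one_swap_mem_two_swap[OF that pair assms(1)] by blast
  obtain z where z: "z \<in> swaps1 y" using assms(2) by blast
  have "swaps2 (A - {y}) \<subseteq> {D \<in> swaps2 (A - {y}). z \<in> D}" using contains[OF z] by blast
  then have "card (swaps2 (A - {y})) \<le> card {D \<in> swaps2 (A - {y}). z \<in> D}"
    by (rule card_mono[rotated]) (simp add: finite_two_swaps)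
  then have le2: "card (swaps2 (A - {y})) \<le> 2"
    using card_two_swaps_containing_le_2[OF pair, of z] by linarith
  show ?thesis
  proof (cases "card (swaps1 y) = 2")
    case True
    then obtain z1 z2 where z12: "swaps1 y = {z1, z2}" "z1 \<noteq> z2" by (auto simp: card_2_iff)
    have "swaps2 (A - {y}) \<subseteq> {{z1, z2}}"
    proof
      fix D assume "D \<in> swaps2 (A - {y})"
      then show "D \<in> {{z1, z2}}"
        using contains[of z1 D] contains[of z2 D] z12 card_2_doubletonI[OF two_swapsD(1)] by auto
    qed
    then have "card (swaps2 (A - {y})) \<le> 1" by (rule card_le_1_if_subset_singleton)
    then show ?thesis using True by simp
  next
    case False
    then show ?thesis using le2 card_one_swaps_le_2[OF assms(1)] by simp
  qed
qed

lemma card_two_swaps_complement_le_2_if_others_4: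
  assumes "A = {p, q, r}" "p \<noteq> q" "q \<noteq> r" "p \<noteq> r"
    and "card (swaps2 (A - {p})) = 4" "card (swaps2 (A - {q})) = 4"
  shows "card (swaps2 (A - {r})) \<le> 2"
proof -
  have pair_q: "A - {q} \<subseteq> A" "card (A - {q}) = 2" using assms(1-4) by auto
  have "\<exists>D1\<in>swaps2 (A - {q}). \<exists>D2\<in>swaps2 (A - {q}). D1 \<inter> D2 = {}"
    by (rule exists_disjoint_pairs_if_degree_le_2)
      (use finite_two_swaps two_swapsD(1) card_two_swaps_containing_le_2[OF pair_q] assms(6) in auto)
  then obtain D1 D2 where D12: "D1 \<in> swaps2 (A - {q})" "D2 \<in> swaps2 (A - {q})" "D1 \<inter> D2 = {}"
    by blast
  let ?cross = "(\<lambda>(a, b). {a, b}) ` (D1 \<times> D2)"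
  have "swaps2 (A - {p}) \<subseteq> ?cross"
  proof (rule subset_cross_pairs_if_meets_disjoint_pairs[OF D12(3)])
    fix D assume "D \<in> swaps2 (A - {p})"
    then show "card D = 2 \<and> D \<inter> D1 \<noteq> {} \<and> D \<inter> D2 \<noteq> {}"
      using two_swapsD(1) two_swaps_complements_meet[of p q] D12(1,2) assms(1,2) by auto
  qed
  moreover have "card ?cross \<le> 4"
  proof -
    have "card ?cross \<le> card (D1 \<times> D2)"
      by (rule card_image_le) (simp add: two_swapsD(4)[OF D12(1)] two_swapsD(4)[OF D12(2)])
    then show ?thesis using two_swapsD(1) D12 by (simp add: card_cartesian_product)
  qed
  moreover have "finite ?cross" using two_swapsD(4)[OF D12(1)] two_swapsD(4)[OF D12(2)] by simp
  ultimately have cross_eq: "swaps2 (A - {p}) = ?cross"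
    using assms(5) card_subset_eq by (metis le_antisym card_mono)
  have "swaps2 (A - {r}) \<subseteq> {D1, D2}"
  proof
    fix D assume D: "D \<in> swaps2 (A - {r})"
    have "D \<inter> {a, b} \<noteq> {}" if "a \<in> D1" "b \<in> D2" for a b
    proof -
      have "{a, b} \<in> swaps2 (A - {p})" using cross_eq that by blast
      then show ?thesis using two_swaps_complements_meet[of r p] D assms(1,4) by auto
    qed
    then show "D \<in> {D1, D2}"
      using pair_eq_if_meets_cross_pairs two_swapsD(1) D D12(1,2) by blast
  qed
  then have "card (swaps2 (A - {r})) \<le> card {D1, D2}" by (rule card_mono[rotated]) simp
  also have "\<dots> \<le> 2" by (simp add: card_insert_if)
  finally show ?thesis .
qed

lemma card_le_12: "card T \<le> 12"
proof -
  define f where "f y = card (swaps1 y) + card (swaps2 (A - {y}))" for y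
  have "inj_on (\<lambda>y. A - {y}) A" by (auto simp: inj_on_def)
  then have "(\<Sum>e\<in>base_pairs. card (swaps2 e)) = (\<Sum>y\<in>A. card (swaps2 (A - {y})))"
    unfolding base_pairs_eq_complements by (simp add: sum.reindex)
  then have card_T: "card T \<le> 1 + (\<Sum>y\<in>A. f y)"
    using card_le_sum_swaps unfolding f_def sum.distrib by simp
  have f_le_3: "f y \<le> 3" if "y \<in> A" "swaps1 y \<noteq> {}" for y
    using card_swaps_le_3_if_one_swap[OF that] unfolding f_def .
  have f_le_4: "f y \<le> 4" if "y \<in> A" for y
    using f_le_3[OF that] card_two_swaps_complement_le_4[OF that] unfolding f_def
    by (cases "swaps1 y = {}") auto
  have f_eq_4: "card (swaps2 (A - {y})) = 4" if "y \<in> A" "f y = 4" for y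
    using f_le_3[OF that(1)] that(2) unfolding f_def by (cases "swaps1 y = {}") auto
  obtain p q r where pqr: "A = {p, q, r}" "p \<noteq> q" "q \<noteq> r" "p \<noteq> r"
    using card_base_eq_3 by (auto simp: card_3_iff)
  have "f p + f q + f r \<le> 11"
  proof (rule ccontr)
    assume "\<not> ?thesis"
    moreover have "f p \<le> 4" "f q \<le> 4" "f r \<le> 4" using f_le_4 pqr(1) by auto
    ultimately have "f p = 4" "f q = 4" "f r = 4" by linarith+
    then show False
      using card_two_swaps_complement_le_2_if_others_4[OF pqr] f_eq_4 pqr(1) by force
  qed
  then show ?thesis using card_T pqr by simp
qed

end

lemma card_two_swaps_le_3:
  assumes "e \<subseteq> A" "card e = 2" "\<And>D. D \<in> swaps2 e \<Longrightarrow> w \<in> D \<or> D = K"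
  shows "card (swaps2 e) \<le> 3"
proof -
  have "swaps2 e \<subseteq> {D \<in> swaps2 e. w \<in> D} \<union> {K}" using assms(3) by blast
  then have "card (swaps2 e) \<le> card ({D \<in> swaps2 e. w \<in> D} \<union> {K})"
    by (rule card_mono[rotated]) (simp add: finite_two_swaps)
  also have "\<dots> \<le> card {D \<in> swaps2 e. w \<in> D} + card {K}" by (rule card_Un_le)
  finally show ?thesis using card_two_swaps_containing_le_2[OF assms(1,2), of w] by simp
qed

text \<open>The three alternatives classify a member witnessing that \<open>insert v (A - e)\<close> is no t-cover.\<close>

lemma non_cover_witness:
  assumes e: "e \<subseteq> A" "card e = 2" and v: "v \<in> G - A"
  obtains y z where "y \<in> A - e" "z \<in> swaps1 y" "z \<noteq> v"
  | e' D' where "e' \<subseteq> A" "card e' = 2" "D' \<in> swaps2 e'" "e \<inter> e' = {}"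
  | e' D' where "e' \<subseteq> A" "card e' = 2" "D' \<in> swaps2 e'" "card (e \<union> e') = 3" "v \<notin> D'"
proof -
  let ?S = "insert v (A - e)"
  have fin_e: "finite e" using e(2) by (intro card_ge_0_finite) simp
  have card_Ae: "card (A - e) = t" using card_base_diff[OF e(1)] e(2) by simp
  have "?S \<subseteq> G" "card ?S = t + 1" using base_subset v card_Ae finite_base by auto
  then obtain C where C: "C \<in> T" "card (?S \<inter> C) < t" using no_cover by blast
  have small: "card X < t" if "X \<subseteq> ?S \<inter> C" for X
  proof -
    have "card X \<le> card (?S \<inter> C)" using that finite_member[OF C(1)] by (intro card_mono) auto
    then show ?thesis using C(2) by simp
  qed
  have small_ins: "v \<notin> C" if "X \<subseteq> A" "card X = 3" "e \<subseteq> X" "insert v (A - X) \<subseteq> C" for X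
  proof
    assume "v \<in> C"
    have "card (A - X) = t - 1" using card_base_diff[OF that(1)] that(2) by simp
    then have "card (insert v (A - X)) = t" using v finite_base t_pos by simp
    moreover have "insert v (A - X) \<subseteq> ?S \<inter> C" using that(3,4) by blast
    ultimately show False using small by (metis less_irrefl)
  qed
  from C(1) show thesis
  proof (cases rule: member_cases)
    case 1
    then have "A - e \<subseteq> ?S \<inter> C" by blast
    then show thesis using small card_Ae by (metis less_irrefl)
  next
    case (2 y z)
    have "y \<notin> e"
    proof
      assume "y \<in> e"
      then have "A - e \<subseteq> ?S \<inter> C" using 2(3) by blast
      then show False using small card_Ae by (metis less_irrefl)
    qed
    moreover have "z \<noteq> v"
    proof
      assume "z = v"
      moreover have "card (insert y e) = 3" using \<open>y \<notin> e\<close> fin_e e(2) by simp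
      ultimately show False using small_ins[of "insert y e"] 2 e(1) v by auto
    qed
    ultimately show thesis using that(1) 2 by blast
  next
    case (3 e' D')
    show thesis
    proof (cases "e \<inter> e' = {}")
      case True
      then show thesis using that(2) 3 by blast
    next
      case False
      have "e \<noteq> e'"
      proof
        assume "e = e'"
        then have "A - e \<subseteq> ?S \<inter> C" using 3(4) by blast
        then show False using small card_Ae by (metis less_irrefl)
      qed
      then have union_3: "card (e \<union> e') = 3" using card_union_pairs_eq_3 e(2) 3(2) False by blast
      have "v \<notin> D'"
      proof
        assume "v \<in> D'"
        then have "insert v (A - (e \<union> e')) \<subseteq> C" using 3(4) by blast
        then show False using small_ins[of "e \<union> e'"] union_3 e(1) 3(1) \<open>v \<in> D'\<close> 3(4) by blast
      qed
      then show thesis using that(3) 3 union_3 by blast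
    qed
  qed
qed

subsection \<open>Pairwise meeting exchanged pairs\<close>

lemma supports_in_triangle:
  assumes meet: "\<And>e e'. e \<in> base_pairs \<Longrightarrow> swaps2 e \<noteq> {} \<Longrightarrow> e' \<in> base_pairs \<Longrightarrow> swaps2 e' \<noteq> {}
      \<Longrightarrow> e \<inter> e' \<noteq> {}"
  obtains p q r where "p \<in> A" "q \<in> A" "r \<in> A" "p \<noteq> q" "q \<noteq> r" "p \<noteq> r"
    "\<And>e. e \<in> base_pairs \<Longrightarrow> swaps2 e \<noteq> {} \<Longrightarrow> e \<subseteq> {p, q, r}"
proof -
  have "A \<noteq> {}" using card_base by auto
  then obtain y0 where "y0 \<in> A" by blast
  then obtain e0 where e0: "e0 \<subseteq> A" "card e0 = 2" "swaps2 e0 \<noteq> {}"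
    using exists_two_swap_avoiding by metis
  then obtain p q where pq: "e0 = {p, q}" "p \<noteq> q" by (auto simp: card_2_iff)
  then have "p \<in> A" "q \<in> A" using e0(1) by auto
  obtain e1 where e1: "e1 \<subseteq> A" "card e1 = 2" "p \<notin> e1" "swaps2 e1 \<noteq> {}"
    by (rule exists_two_swap_avoiding[OF \<open>p \<in> A\<close>])
  then have "q \<in> e1" using meet[of e1 e0] e0 pq by blast
  then obtain r where r: "e1 = {q, r}" "r \<noteq> q" using card_2_obtain_other[OF e1(2)] by blast
  then have "r \<in> A" "r \<noteq> p" using e1(1,3) by auto
  obtain e2 where e2: "e2 \<subseteq> A" "card e2 = 2" "q \<notin> e2" "swaps2 e2 \<noteq> {}"
    by (rule exists_two_swap_avoiding[OF \<open>q \<in> A\<close>])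
  then have "p \<in> e2" "r \<in> e2" using meet[of e2 e0] meet[of e2 e1] e0 e1 pq r by blast+
  then have e2_eq: "e2 = {p, r}" using card_2_doubletonI[OF e2(2)] \<open>r \<noteq> p\<close> by blast
  have "e \<subseteq> {p, q, r}" if "e \<in> base_pairs" "swaps2 e \<noteq> {}" for e
  proof (rule pair_subset_if_meets_triangle)
    show "card e = 2" using that(1) by simp
    show "e \<inter> {p, q} \<noteq> {}" using meet[OF that, of e0] e0 pq by auto
    show "e \<inter> {q, r} \<noteq> {}" using meet[OF that, of e1] e1 r by auto
    show "e \<inter> {p, r} \<noteq> {}" using meet[OF that, of e2] e2 e2_eq by auto
  qed (use pq r \<open>r \<noteq> p\<close> in auto)
  then show thesis
    using that \<open>p \<in> A\<close> \<open>q \<in> A\<close> \<open>r \<in> A\<close> pq(2) r(2) \<open>r \<noteq> p\<close> by auto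
qed

context
  fixes p q r
  assumes triangle: "p \<in> A" "q \<in> A" "r \<in> A" "p \<noteq> q" "q \<noteq> r" "p \<noteq> r"
    and supports: "\<And>e. e \<in> base_pairs \<Longrightarrow> swaps2 e \<noteq> {} \<Longrightarrow> e \<subseteq> {p, q, r}"
begin

lemma card_base_diff_triangle: "card (A - {p, q, r}) = t - 1"
  using card_base_diff[of "{p, q, r}"] triangle by simp

lemma base_diff_triangle_subset_members:
  assumes "\<forall>y \<in> A - {p, q, r}. swaps1 y = {}" "C \<in> T"
  shows "A - {p, q, r} \<subseteq> C"
  using assms(2)
proof (cases rule: member_cases)
  case (2 y z)
  then show ?thesis using assms(1) by auto
next
  case (3 e D)
  then have "e \<subseteq> {p, q, r}" using supports by blast
  then show ?thesis using 3(4) by blast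
qed simp

text \<open>Here every member contains \<open>A - {p, q, r}\<close>, and removing it leaves a tight family with
  t = 1.\<close>

lemma card_le_12_if_no_one_swap_off_triangle:
  assumes "\<forall>y \<in> A - {p, q, r}. swaps1 y = {}"
  shows "card T \<le> 12"
proof -
  let ?W = "A - {p, q, r}"
  have common: "?W \<subseteq> C" if "C \<in> T" for C
    using base_diff_triangle_subset_members[OF assms that] .
  have "tight_family (G - ?W) 1 ((\<lambda>C. C - ?W) ` T)"
    by (rule tight_family_remove_common_part[OF common]) (use base_subset card_base_diff_triangle in auto)
  then have "tight_family_base (G - ?W) 1 ((\<lambda>C. C - ?W) ` T) (A - ?W)"
    using base_member by (simp add: tight_family_base_def tight_family_base_axioms_def)
  then have "card ((\<lambda>C. C - ?W) ` T) \<le> 12" by (rule tight_family_base.card_le_12) simp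
  moreover have "inj_on (\<lambda>C. C - ?W) T"
  proof (rule inj_onI)
    fix C C' assume "C \<in> T" "C' \<in> T" "C - ?W = C' - ?W"
    then show "C = C'" using common[of C] common[of C'] by blast
  qed
  ultimately show ?thesis by (simp add: card_image)
qed

lemma supports_eq_triangle_sides:
  assumes "e \<in> base_pairs" "swaps2 e \<noteq> {}"
  shows "e \<in> {{p, q}, {q, r}, {p, r}}"
proof -
  obtain a b where ab: "e = {a, b}" "a \<noteq> b" using assms(1) by (auto simp: card_2_iff)
  then show ?thesis using supports[OF assms] by auto
qed

lemma sum_two_swaps_eq_triangle:
  "(\<Sum>e\<in>base_pairs. card (swaps2 e))
    = card (swaps2 {p, q}) + card (swaps2 {q, r}) + card (swaps2 {p, r})"
proof -
  have "{{p, q}, {q, r}, {p, r}} \<subseteq> base_pairs" using triangle by auto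
  moreover have "card (swaps2 e) = 0" if "e \<in> base_pairs - {{p, q}, {q, r}, {p, r}}" for e
  proof -
    have "swaps2 e = {}" using supports_eq_triangle_sides[of e] that by blast
    then show ?thesis by simp
  qed
  ultimately have "(\<Sum>e\<in>base_pairs. card (swaps2 e)) = (\<Sum>e\<in>{{p, q}, {q, r}, {p, r}}. card (swaps2 e))"
    by (intro sum.mono_neutral_right finite_base_pairs) auto
  also have "\<dots> = card (swaps2 {p, q}) + card (swaps2 {q, r}) + card (swaps2 {p, r})"
    using triangle by (simp add: doubleton_eq_iff)
  finally show ?thesis .
qed

lemma card_le_if_one_swap_off_triangle:
  assumes "2 \<le> t" "y0 \<in> A - {p, q, r}" "z0 \<in> swaps1 y0"
  shows "card T \<le> 3 * t + 8"
proof -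
  let ?W = "A - {p, q, r}"
  have contains: "z \<in> D" if "y \<in> ?W" "z \<in> swaps1 y" "e \<in> base_pairs" "D \<in> swaps2 e" for y z e D
  proof -
    have "e \<subseteq> {p, q, r}" using supports[OF that(3)] that(4) by blast
    then show ?thesis using one_swap_mem_two_swap[OF that(2,4)] that(1,3) by blast
  qed
  have sides: "{p, q} \<in> base_pairs" "{q, r} \<in> base_pairs" "{p, r} \<in> base_pairs"
    using triangle by auto
  have "(\<Sum>y\<in>A. card (swaps1 y)) = (\<Sum>y\<in>?W. card (swaps1 y)) + (\<Sum>y\<in>{p, q, r}. card (swaps1 y))"
    using sum.subset_diff[of "{p, q, r}" A] triangle finite_base by simp
  moreover have "(\<Sum>y\<in>{p, q, r}. card (swaps1 y)) \<le> 6"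
    using card_one_swaps_le_2[of p] card_one_swaps_le_2[of q] card_one_swaps_le_2[of r] triangle
      by simp
  ultimately have sum_one_swaps: "(\<Sum>y\<in>A. card (swaps1 y)) \<le> 6 + (\<Sum>y\<in>?W. card (swaps1 y))" by linarith
  show ?thesis
  proof (cases "\<exists>y1\<in>?W. card (swaps1 y1) = 2")
    case True
    then obtain y1 z1 z2 where y1: "y1 \<in> ?W" "swaps1 y1 = {z1, z2}" "z1 \<noteq> z2"
      by (auto simp: card_2_iff)
    have le1: "card (swaps2 e) \<le> 1" if "e \<in> base_pairs" for e
    proof -
      have "swaps2 e \<subseteq> {{z1, z2}}"
      proof
        fix D assume D: "D \<in> swaps2 e"
        have "z1 \<in> D" "z2 \<in> D" using contains[OF y1(1) _ that D] y1(2) by auto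
        then show "D \<in> {{z1, z2}}" using card_2_doubletonI[OF two_swapsD(1)[OF D]] y1(3) by simp
      qed
      then show ?thesis by (rule card_le_1_if_subset_singleton)
    qed
    have "(\<Sum>e\<in>base_pairs. card (swaps2 e)) \<le> 3"
      using sum_two_swaps_eq_triangle le1[OF sides(1)] le1[OF sides(2)] le1[OF sides(3)] by linarith
    moreover have "(\<Sum>y\<in>?W. card (swaps1 y)) \<le> 2 * (t - 1)"
      using sum_bounded_above[of ?W "\<lambda>y. card (swaps1 y)" 2] card_one_swaps_le_2 card_base_diff_triangle
      by (simp add: mult.commute)
    ultimately show ?thesis using card_le_sum_swaps sum_one_swaps assms(1) by linarith
  next
    case False
    have le2: "card (swaps2 e) \<le> 2" if "e \<in> base_pairs" for e
    proof -
      have "swaps2 e \<subseteq> {D \<in> swaps2 e. z0 \<in> D}" using contains[OF assms(2,3) that] by blast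
      then have "card (swaps2 e) \<le> card {D \<in> swaps2 e. z0 \<in> D}"
        by (rule card_mono[rotated]) (simp add: finite_two_swaps)
      then show ?thesis using card_two_swaps_containing_le_2[of e z0] that by simp
    qed
    have "(\<Sum>e\<in>base_pairs. card (swaps2 e)) \<le> 6"
      using sum_two_swaps_eq_triangle le2[OF sides(1)] le2[OF sides(2)] le2[OF sides(3)] by linarith
    moreover have "card (swaps1 y) \<le> 1" if "y \<in> ?W" for y
    proof -
      have "card (swaps1 y) \<noteq> 2" using False that by blast
      then show ?thesis using card_one_swaps_le_2[of y] that by simp
    qed
    then have "(\<Sum>y\<in>?W. card (swaps1 y)) \<le> t - 1"
      using sum_bounded_above[of ?W "\<lambda>y. card (swaps1 y)" 1] card_base_diff_triangle by simp
    ultimately show ?thesis using card_le_sum_swaps sum_one_swaps assms(1) by linarith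
  qed
qed

end

lemma card_le_if_supports_intersect:
  assumes "2 \<le> t"
    and meet: "\<And>e e'. e \<in> base_pairs \<Longrightarrow> swaps2 e \<noteq> {} \<Longrightarrow> e' \<in> base_pairs \<Longrightarrow> swaps2 e' \<noteq> {}
      \<Longrightarrow> e \<inter> e' \<noteq> {}"
  shows "card T \<le> 3 * t + 8"
proof -
  obtain p q r where triangle: "p \<in> A" "q \<in> A" "r \<in> A" "p \<noteq> q" "q \<noteq> r" "p \<noteq> r"
    and supports: "\<And>e. e \<in> base_pairs \<Longrightarrow> swaps2 e \<noteq> {} \<Longrightarrow> e \<subseteq> {p, q, r}"
    using supports_in_triangle[OF meet] by blast
  show ?thesis
  proof (cases "\<forall>y \<in> A - {p, q, r}. swaps1 y = {}")
    case True
    then show ?thesis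
      using card_le_12_if_no_one_swap_off_triangle[OF triangle supports] assms(1) by fastforce
  next
    case False
    then obtain y0 z0 where "y0 \<in> A - {p, q, r}" "z0 \<in> swaps1 y0" by blast
    then show ?thesis
      using card_le_if_one_swap_off_triangle[OF triangle supports assms(1)] by blast
  qed
qed

lemma two_swaps_adjacent_meet:
  assumes "{a, b, c} \<subseteq> A" "distinct [a, b, c]" "D \<in> swaps2 {a, b}" "D' \<in> swaps2 {a, c}"
  shows "D \<inter> D' \<noteq> {}"
proof (rule two_swaps_meet[OF assms(3,4)])
  show "{a, b} \<subseteq> A" "{a, c} \<subseteq> A" using assms(1) by auto
  have "{a, b} \<union> {a, c} = {a, b, c}" by blast
  then show "card ({a, b} \<union> {a, c}) = 3" using assms(2) by simp
qed

lemma two_swaps_opposite_eq: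
  assumes "{a, b, c, d} \<subseteq> A" "distinct [a, b, c, d]" "D \<in> swaps2 {a, b}" "D' \<in> swaps2 {c, d}"
  shows "D = D'"
  by (rule two_swaps_eq_if_disjoint[OF assms(3,4)]) (use assms(1,2) in auto)

end

section \<open>Crossing configurations\<close>

locale crossing_configuration = tight_family_base +
  fixes p1 p2 q1 q2 w1 w2 u
  assumes base_points: "{p1, p2, q1, q2} \<subseteq> A" "distinct [p1, p2, q1, q2]"
    and two_swaps_p: "swaps2 {p1, p2} = {{w1, w2}}"
    and two_swaps_q: "swaps2 {q1, q2} = {{w1, w2}}"
    and crossing_swap: "{w1, u} \<in> swaps2 {p1, q1}"
    and u_neq_w2: "u \<noteq> w2"
begin

definition "cross_pairs = {{p1, q1}, {p1, q2}, {p2, q1}, {p2, q2}}"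

definition "near_pairs = (\<lambda>y. {p1, y}) ` (A - {p1, q1, q2}) \<union> (\<lambda>y. {q1, y}) ` (A - {p1, p2, q1})"

lemma points_in_base [simp]: "p1 \<in> A" "p2 \<in> A" "q1 \<in> A" "q2 \<in> A"
  using base_points by simp_all

lemma points_distinct [simp]:
  "p1 \<noteq> p2" "p1 \<noteq> q1" "p1 \<noteq> q2" "p2 \<noteq> q1" "p2 \<noteq> q2" "q1 \<noteq> q2"
  "p2 \<noteq> p1" "q1 \<noteq> p1" "q2 \<noteq> p1" "q1 \<noteq> p2" "q2 \<noteq> p2" "q2 \<noteq> q1"
  using base_points by auto

lemma w_in_two_swaps: "{w1, w2} \<in> swaps2 {p1, p2}" "{w1, w2} \<in> swaps2 {q1, q2}"
  using two_swaps_p two_swaps_q by simp_all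

lemma outside_points: "w1 \<notin> A" "w2 \<notin> A" "u \<notin> A" "w1 \<noteq> w2" "w1 \<noteq> u"
proof -
  have "card {w1, w2} = 2" "{w1, w2} \<inter> A = {}" using two_swapsD(1,2)[OF w_in_two_swaps(1)] by auto
  moreover have "card {w1, u} = 2" "{w1, u} \<inter> A = {}" using two_swapsD(1,2)[OF crossing_swap] by auto
  ultimately show "w1 \<notin> A" "w2 \<notin> A" "u \<notin> A" "w1 \<noteq> w2" "w1 \<noteq> u"
    by (auto simp: card_insert_if split: if_splits)
qed

lemma one_swaps_subset_w1_w2:
  assumes "y \<in> A"
  shows "swaps1 y \<subseteq> {w1, w2}"
proof
  fix z assume z: "z \<in> swaps1 y"
  show "z \<in> {w1, w2}"
  proof (cases "y \<in> {p1, p2}")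
    case True
    then have "y \<notin> {q1, q2}" using base_points by auto
    then show ?thesis using one_swap_mem_two_swap[OF z w_in_two_swaps(2)] base_points assms by simp
  next
    case False
    then show ?thesis using one_swap_mem_two_swap[OF z w_in_two_swaps(1)] base_points assms by simp
  qed
qed

lemma one_swaps_subset_w1:
  assumes "y \<in> A" "y \<notin> {p1, q1}"
  shows "swaps1 y \<subseteq> {w1}"
proof
  fix z assume z: "z \<in> swaps1 y"
  then have "z \<in> {w1, u}" using one_swap_mem_two_swap[OF z crossing_swap] base_points assms by auto
  then show "z \<in> {w1}" using one_swaps_subset_w1_w2[OF assms(1)] z u_neq_w2 by auto
qed

lemma sum_one_swaps_le: "(\<Sum>y\<in>A. card (swaps1 y)) \<le> t + 4"
proof -
  have "(\<Sum>y\<in>A. card (swaps1 y)) = (\<Sum>y\<in>A - {p1, q1}. card (swaps1 y)) + (\<Sum>y\<in>{p1, q1}. card (swaps1 y))"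
    using sum.subset_diff[of "{p1, q1}" A] base_points finite_base by simp
  moreover have "card (swaps1 y) \<le> 1" if "y \<in> A - {p1, q1}" for y
    by (rule card_le_1_if_subset_singleton[OF one_swaps_subset_w1]) (use that in auto)
  then have "(\<Sum>y\<in>A - {p1, q1}. card (swaps1 y)) \<le> card (A - {p1, q1})"
    using sum_bounded_above[of "A - {p1, q1}" "\<lambda>y. card (swaps1 y)" 1] by simp
  moreover have "card (A - {p1, q1}) = t" using card_base_diff[of "{p1, q1}"] base_points by simp
  moreover have "(\<Sum>y\<in>{p1, q1}. card (swaps1 y)) \<le> 4"
    using card_one_swaps_le_2[of p1] card_one_swaps_le_2[of q1] base_points by simp
  ultimately show ?thesis by linarith
qed

lemma two_swaps_noncross:
  assumes "e \<in> base_pairs" "e \<notin> cross_pairs"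
  shows "swaps2 e \<subseteq> {{w1, w2}}"
proof
  fix D assume D: "D \<in> swaps2 e"
  have "e \<inter> {p1, p2} = {} \<or> e \<inter> {q1, q2} = {}"
  proof (rule ccontr)
    assume "\<not> ?thesis"
    then obtain a b where ab: "a \<in> e" "a \<in> {p1, p2}" "b \<in> e" "b \<in> {q1, q2}" by blast
    moreover have "a \<noteq> b" using ab base_points by auto
    ultimately have "e = {a, b}" using card_2_doubletonI[of e a b] assms(1) by simp
    then show False using assms(2) ab(2,4) unfolding cross_pairs_def by auto
  qed
  then show "D \<in> {{w1, w2}}"
  proof
    assume "e \<inter> {p1, p2} = {}"
    then show ?thesis
      using two_swaps_eq_if_disjoint[OF D w_in_two_swaps(1)] assms(1) base_points by simp
  next
    assume "e \<inter> {q1, q2} = {}"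
    then show ?thesis
      using two_swaps_eq_if_disjoint[OF D w_in_two_swaps(2)] assms(1) base_points by simp
  qed
qed

lemma two_swaps_noncross_empty:
  assumes "e \<in> base_pairs" "e \<notin> cross_pairs" "e \<inter> {p1, q1} = {}"
  shows "swaps2 e = {}"
proof (rule ccontr)
  assume "swaps2 e \<noteq> {}"
  then obtain D where D: "D \<in> swaps2 e" by blast
  then have "D = {w1, w2}" using two_swaps_noncross[OF assms(1,2)] by blast
  moreover have "D = {w1, u}"
  proof (rule two_swaps_eq_if_disjoint[OF D crossing_swap])
    show "e \<subseteq> A" "card e = 2" using assms(1) by simp_all
    show "{p1, q1} \<subseteq> A" "card {p1, q1} = 2" using base_points by simp_all
  qed (rule assms(3))
  ultimately have "{w1, w2} = {w1, u}" by simp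
  then show False using u_neq_w2 outside_points(4) by (metis doubleton_eq_iff)
qed

lemma two_swaps_support_cross_or_near:
  assumes "e \<in> base_pairs" "swaps2 e \<noteq> {}"
  shows "e \<in> cross_pairs \<union> near_pairs"
proof (rule ccontr)
  assume nc: "e \<notin> cross_pairs \<union> near_pairs"
  then have "e \<notin> cross_pairs" by simp
  then have "e \<inter> {p1, q1} \<noteq> {}" using two_swaps_noncross_empty[OF assms(1)] assms(2) by blast
  then obtain a y where ay: "e = {a, y}" "a \<in> {p1, q1}" "y \<noteq> a"
    using assms(1) by (auto simp: card_2_iff)
  then have "y \<in> A" using assms(1) by auto
  consider "a = p1" | "a = q1" using ay(2) by blast
  then show False
  proof cases
    case 1
    then have "y \<notin> {q1, q2}" using nc ay unfolding cross_pairs_def by auto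
    then have "e \<in> (\<lambda>y. {p1, y}) ` (A - {p1, q1, q2})" using \<open>y \<in> A\<close> ay 1 by auto
    then show False using nc unfolding near_pairs_def by simp
  next
    case 2
    then have "y \<notin> {p1, p2}" using nc ay unfolding cross_pairs_def by (auto simp: insert_commute)
    then have "e \<in> (\<lambda>y. {q1, y}) ` (A - {p1, p2, q1})" using \<open>y \<in> A\<close> ay 2 by auto
    then show False using nc unfolding near_pairs_def by simp
  qed
qed

lemma card_near_pairs_le: "card near_pairs \<le> 2 * (t - 1)"
proof -
  have "card near_pairs
      \<le> card ((\<lambda>y. {p1, y}) ` (A - {p1, q1, q2})) + card ((\<lambda>y. {q1, y}) ` (A - {p1, p2, q1}))"
    unfolding near_pairs_def by (rule card_Un_le)
  also have "\<dots> \<le> card (A - {p1, q1, q2}) + card (A - {p1, p2, q1})"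
    using finite_base by (intro add_mono card_image_le) simp_all
  also have "\<dots> = 2 * (t - 1)"
    using card_base_diff[of "{p1, q1, q2}"] card_base_diff[of "{p1, p2, q1}"] base_points by simp
  finally show ?thesis .
qed

lemma near_pairs_not_cross:
  assumes "e \<in> near_pairs"
  shows "e \<notin> cross_pairs"
  using assms unfolding near_pairs_def
proof
  assume "e \<in> (\<lambda>y. {p1, y}) ` (A - {p1, q1, q2})"
  then obtain y where "e = {p1, y}" "y \<notin> {p1, q1, q2}" by blast
  then show ?thesis using base_points(2) by (simp add: cross_pairs_def doubleton_eq_iff)
next
  assume "e \<in> (\<lambda>y. {q1, y}) ` (A - {p1, p2, q1})"
  then obtain y where "e = {q1, y}" "y \<notin> {p1, p2, q1}" by blast
  then show ?thesis using base_points(2) by (simp add: cross_pairs_def doubleton_eq_iff)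
qed

lemma finite_near_pairs: "finite near_pairs"
  unfolding near_pairs_def using finite_base by simp

lemma sum_two_swaps_le:
  "(\<Sum>e\<in>base_pairs. card (swaps2 e))
    \<le> 2 * (t - 1) + card (swaps2 {p1, q1}) + card (swaps2 {p1, q2})
      + card (swaps2 {p2, q1}) + card (swaps2 {p2, q2})"
proof -
  have sub: "cross_pairs \<union> near_pairs \<subseteq> base_pairs"
    using base_points unfolding cross_pairs_def near_pairs_def by auto
  have "card (swaps2 e) = 0" if "e \<in> base_pairs - (cross_pairs \<union> near_pairs)" for e
    using two_swaps_support_cross_or_near[of e] that by force
  then have "(\<Sum>e\<in>base_pairs. card (swaps2 e)) = (\<Sum>e\<in>cross_pairs \<union> near_pairs. card (swaps2 e))"
    by (intro sum.mono_neutral_right[OF finite_base_pairs sub]) simp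
  also have "\<dots> = (\<Sum>e\<in>cross_pairs. card (swaps2 e)) + (\<Sum>e\<in>near_pairs. card (swaps2 e))"
  proof (rule sum.union_disjoint)
    show "cross_pairs \<inter> near_pairs = {}" using near_pairs_not_cross by blast
  qed (simp_all add: cross_pairs_def finite_near_pairs)
  also have "(\<Sum>e\<in>near_pairs. card (swaps2 e)) \<le> card near_pairs"
  proof -
    have "card (swaps2 e) \<le> 1" if e: "e \<in> near_pairs" for e
    proof -
      have "swaps2 e \<subseteq> {{w1, w2}}"
        using two_swaps_noncross[of e] near_pairs_not_cross[OF e] e sub by blast
      then show "card (swaps2 e) \<le> 1" by (rule card_le_1_if_subset_singleton)
    qed
    then show ?thesis using sum_bounded_above[of near_pairs "\<lambda>e. card (swaps2 e)" 1] by simp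
  qed
  also have "(\<Sum>e\<in>cross_pairs. card (swaps2 e))
      = card (swaps2 {p1, q1}) + card (swaps2 {p1, q2})
        + card (swaps2 {p2, q1}) + card (swaps2 {p2, q2})"
    using base_points(2) unfolding cross_pairs_def by (simp add: doubleton_eq_iff)
  finally show ?thesis using card_near_pairs_le by linarith
qed

lemma two_swaps_p1_q2_cases:
  assumes "D \<in> swaps2 {p1, q2}"
  shows "w1 \<in> D \<or> D = {w2, u}"
proof -
  have "D \<inter> {w1, w2} \<noteq> {}"
    using two_swaps_adjacent_meet[OF _ _ assms w_in_two_swaps(1)] base_points by simp
  moreover have "D \<inter> {w1, u} \<noteq> {}"
    using two_swaps_adjacent_meet[OF _ _ assms crossing_swap] base_points by simp
  ultimately show ?thesis
    using pair_eq_if_meets_two_pairs[OF two_swapsD(1)[OF assms]] u_neq_w2 by blast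
qed

lemma two_swaps_p2_q1_cases:
  assumes "D \<in> swaps2 {p2, q1}"
  shows "w1 \<in> D \<or> D = {w2, u}"
proof -
  have "{w1, w2} \<in> swaps2 {p2, p1}" "{w1, u} \<in> swaps2 {q1, p1}" "D \<in> swaps2 {q1, p2}"
    using w_in_two_swaps(1) crossing_swap assms by (simp_all add: insert_commute)
  then have "D \<inter> {w1, w2} \<noteq> {}" "D \<inter> {w1, u} \<noteq> {}"
    using two_swaps_adjacent_meet[of p2 q1 p1 D "{w1, w2}"]
      two_swaps_adjacent_meet[of q1 p2 p1 D "{w1, u}"] assms by simp_all
  then show ?thesis
    using pair_eq_if_meets_two_pairs[OF two_swapsD(1)[OF assms]] u_neq_w2 by blast
qed

lemma card_two_swaps_p1_q2_add_p2_q1_le_3: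
  "card (swaps2 {p1, q2}) + card (swaps2 {p2, q1}) \<le> 3"
proof (rule card_add_le_3_if_all_equal[OF finite_two_swaps finite_two_swaps])
  show "card (swaps2 {p1, q2}) \<le> 3"
    by (rule card_two_swaps_le_3[of _ w1 "{w2, u}"]) (simp_all add: two_swaps_p1_q2_cases)
  show "card (swaps2 {p2, q1}) \<le> 3"
    by (rule card_two_swaps_le_3[of _ w1 "{w2, u}"]) (simp_all add: two_swaps_p2_q1_cases)
  show "D = D'" if "D \<in> swaps2 {p1, q2}" "D' \<in> swaps2 {p2, q1}" for D D'
    using two_swaps_opposite_eq[OF _ _ that] base_points by simp
qed

lemma card_le_if_two_swap_p2_q2:
  assumes "swaps2 {p2, q2} \<noteq> {}"
  shows "card T \<le> 3 * t + 8"
proof -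
  obtain D where D: "D \<in> swaps2 {p2, q2}" using assms by blast
  have opposite: "D1 = D2" if "D1 \<in> swaps2 {p1, q1}" "D2 \<in> swaps2 {p2, q2}" for D1 D2
    using two_swaps_opposite_eq[OF _ _ that] base_points by simp
  have "card (swaps2 {p1, q1}) \<le> 1"
    using opposite D by (intro card_le_1_if_subset_singleton[of _ D]) blast
  moreover have "card (swaps2 {p2, q2}) \<le> 1"
    using opposite crossing_swap by (intro card_le_1_if_subset_singleton[of _ "{w1, u}"]) blast
  ultimately show ?thesis
    using card_le_sum_swaps sum_one_swaps_le sum_two_swaps_le card_two_swaps_p1_q2_add_p2_q1_le_3 t_pos
    by linarith
qed

lemma card_le_if_two_swap_w2_u:
  assumes "{w2, u} \<in> swaps2 {p1, q2}" "swaps2 {p2, q2} = {}"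
  shows "card T \<le> 3 * t + 8"
proof -
  have N_w2: "swaps1 y \<subseteq> {w2}" if "y \<in> A" "y \<notin> {p1, q2}" for y
  proof
    fix z assume z: "z \<in> swaps1 y"
    then have "z \<in> {w2, u}" using one_swap_mem_two_swap[OF z assms(1)] base_points that by auto
    then show "z \<in> {w2}" using one_swaps_subset_w1_w2[OF that(1)] z outside_points(5) by auto
  qed
  have "swaps1 y = {}" if "y \<in> A - {p1, q1, q2}" for y
    using N_w2[of y] one_swaps_subset_w1[of y] outside_points(4) that by auto
  then have "(\<Sum>y\<in>A. card (swaps1 y)) = (\<Sum>y\<in>{p1, q1, q2}. card (swaps1 y))"
    using base_points finite_base by (intro sum.mono_neutral_right) auto
  also have "\<dots> \<le> 2 + 1 + 1"
  proof -
    have "card (swaps1 q1) \<le> 1" "card (swaps1 q2) \<le> 1"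
      using N_w2[of q1] one_swaps_subset_w1[of q2] card_le_1_if_subset_singleton by simp_all
    then show ?thesis using card_one_swaps_le_2[of p1] base_points by simp
  qed
  finally have "(\<Sum>y\<in>A. card (swaps1 y)) \<le> 4" by simp
  moreover have "card (swaps2 {p1, q1}) \<le> 3"
  proof (rule card_two_swaps_le_3[of _ w2 "{w1, u}"])
    fix D assume D: "D \<in> swaps2 {p1, q1}"
    have "D \<inter> {w2, w1} \<noteq> {}"
      using two_swaps_adjacent_meet[OF _ _ D w_in_two_swaps(1)] base_points
        by (simp add: insert_commute)
    moreover have "D \<inter> {w2, u} \<noteq> {}"
      using two_swaps_adjacent_meet[OF _ _ D assms(1)] base_points by simp
    ultimately show "w2 \<in> D \<or> D = {w1, u}"
      using pair_eq_if_meets_two_pairs[OF two_swapsD(1)[OF D]] outside_points(5) by blast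
  qed (use base_points in simp_all)
  ultimately show ?thesis
    using card_le_sum_swaps sum_two_swaps_le card_two_swaps_p1_q2_add_p2_q1_le_3 assms(2) t_pos
    by simp
qed

lemma two_swap_w2_u_if_no_two_swap_p2_q2:
  assumes "swaps2 {p2, q2} = {}"
  shows "{w2, u} \<in> swaps2 {p1, q2} \<or> {w2, u} \<in> swaps2 {p2, q1}"
proof -
  have pair: "{p1, q1} \<subseteq> A" "card {p1, q1} = 2" using base_points by simp_all
  have w1: "w1 \<in> G - A" using outside_points(1) member_subset two_swapsD(3)[OF crossing_swap] by blast
  show ?thesis
  proof (cases rule: non_cover_witness[OF pair w1])
    case (1 y z)
    then show ?thesis using one_swaps_subset_w1[of y] by auto
  next
    case (2 e D)
    then have "e \<notin> cross_pairs" using assms base_points(2) unfolding cross_pairs_def by auto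
    then show ?thesis using two_swaps_noncross_empty[of e] 2 by (auto simp: Int_commute)
  next
    case (3 e D)
    show ?thesis
    proof (cases "e \<in> cross_pairs")
      case True
      then consider "e = {p1, q1}" | "e = {p1, q2}" | "e = {p2, q1}" | "e = {p2, q2}"
        unfolding cross_pairs_def by blast
      then show ?thesis
      proof cases
        case 1
        then show ?thesis using 3(4) base_points by simp
      next
        case 2
        then show ?thesis using two_swaps_p1_q2_cases 3 by blast
      next
        case 3
        then show ?thesis using two_swaps_p2_q1_cases \<open>D \<in> swaps2 e\<close> \<open>w1 \<notin> D\<close> by blast
      next
        case 4
        then show ?thesis using assms 3 by blast
      qed
    next
      case False
      then show ?thesis using two_swaps_noncross[of e] 3 by auto
    qed
  qed
qed

lemma card_le_three_t_plus_8: "card T \<le> 3 * t + 8"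
proof (cases "swaps2 {p2, q2} = {}")
  case True
  interpret swapped: crossing_configuration G t T A q1 q2 p1 p2 w1 w2 u
    using base_points two_swaps_p two_swaps_q crossing_swap u_neq_w2
    by unfold_locales (auto simp: insert_commute)
  from two_swap_w2_u_if_no_two_swap_p2_q2[OF True] show ?thesis
  proof
    assume "{w2, u} \<in> swaps2 {p1, q2}"
    then show ?thesis using card_le_if_two_swap_w2_u True by blast
  next
    assume "{w2, u} \<in> swaps2 {p2, q1}"
    \<comment> \<open>the configuration is symmetric under exchanging the roles of the p's and the q's\<close>
    then show ?thesis
      using swapped.card_le_if_two_swap_w2_u True by (simp add: insert_commute)
  qed
next
  case False
  then show ?thesis using card_le_if_two_swap_p2_q2 by blast
qed

end

context tight_family_base
begin

lemma members_subset_if_unique_two_swap: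
  assumes "e1 \<in> base_pairs" "e2 \<in> base_pairs" "e1 \<inter> e2 = {}" "D0 \<in> swaps2 e1" "D0 \<in> swaps2 e2"
    and unique: "\<And>e. e \<in> base_pairs \<Longrightarrow> swaps2 e \<subseteq> {D0}"
    and "C \<in> T"
  shows "C \<subseteq> A \<union> D0"
  using assms(7)
proof (cases rule: member_cases)
  case (2 y z)
  have "z \<in> D0"
  proof (cases "y \<in> e1")
    case True
    then have "y \<notin> e2" using assms(3) by blast
    then show ?thesis using one_swap_mem_two_swap[OF 2(2) assms(5)] assms(2) 2(1) by simp
  next
    case False
    then show ?thesis using one_swap_mem_two_swap[OF 2(2) assms(4)] assms(1) 2(1) by simp
  qed
  then show ?thesis using 2(3) by blast
next
  case (3 e D)
  then have "D = D0" using unique[of e] by auto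
  then show ?thesis using 3(4) by blast
qed simp

lemma crossing_configuration_if_extra_two_swap:
  assumes e12: "e1 \<in> base_pairs" "e2 \<in> base_pairs" "e1 \<inter> e2 = {}" "swaps2 e1 = {D0}" "swaps2 e2 = {D0}"
    and e: "e \<in> base_pairs" "D \<in> swaps2 e" "D \<noteq> D0"
  obtains p1 p2 q1 q2 w1 w2 u where "crossing_configuration G t T A p1 p2 q1 q2 w1 w2 u"
proof -
  have meets: "e \<inter> e' \<noteq> {}" if "e' \<in> base_pairs" "swaps2 e' = {D0}" for e'
  proof
    assume "e \<inter> e' = {}"
    then have "D = D0" using two_swaps_eq_if_disjoint[OF e(2), of D0 e'] that e(1) by simp
    then show False using e(3) by simp
  qed
  obtain p1 q1 where p1: "p1 \<in> e" "p1 \<in> e1" and q1: "q1 \<in> e" "q1 \<in> e2"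
    using meets[OF e12(1,4)] meets[OF e12(2,5)] by blast
  have "p1 \<noteq> q1" using p1 q1 e12(3) by blast
  then have e_eq: "e = {p1, q1}" using card_2_doubletonI[of e p1 q1] p1(1) q1(1) e(1) by simp
  obtain p2 where e1_eq: "e1 = {p1, p2}" "p2 \<noteq> p1"
    using card_2_obtain_other[of e1 p1] e12(1) p1(2) by auto
  obtain q2 where e2_eq: "e2 = {q1, q2}" "q2 \<noteq> q1"
    using card_2_obtain_other[of e2 q1] e12(2) q1(2) by auto
  have "D0 \<in> swaps2 e1" using e12(4) by simp
  moreover have "e \<noteq> e1" "e \<inter> e1 \<noteq> {}" using q1 p1 e12(3) by blast+
  then have "card (e \<union> e1) = 3" using card_union_pairs_eq_3[of e e1] e(1) e12(1) by simp
  ultimately have "D \<inter> D0 \<noteq> {}" using two_swaps_meet[OF e(2)] e(1) e12(1) by simp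
  then obtain w1 where w1: "w1 \<in> D" "w1 \<in> D0" by blast
  obtain w2 where D0_eq: "D0 = {w1, w2}"
    using card_2_obtain_other[OF two_swapsD(1)[OF \<open>D0 \<in> swaps2 e1\<close>] w1(2)] by blast
  obtain u where D_eq: "D = {w1, u}"
    using card_2_obtain_other[OF two_swapsD(1)[OF e(2)] w1(1)] by blast
  have "crossing_configuration G t T A p1 p2 q1 q2 w1 w2 u"
  proof unfold_locales
    show "{p1, p2, q1, q2} \<subseteq> A" using e12(1,2) e1_eq e2_eq by auto
    show "distinct [p1, p2, q1, q2]" using e1_eq e2_eq e12(3) \<open>p1 \<noteq> q1\<close> by auto
    show "swaps2 {p1, p2} = {{w1, w2}}" "swaps2 {q1, q2} = {{w1, w2}}"
      using e12(4,5) e1_eq e2_eq D0_eq by simp_all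
    show "{w1, u} \<in> swaps2 {p1, q1}" using e(2) e_eq D_eq by simp
    show "u \<noteq> w2" using e(3) D_eq D0_eq by auto
  qed
  then show thesis by (rule that)
qed

lemma card_le_or_members_in_t_plus_4_set:
  assumes "2 \<le> t"
  shows "card T \<le> 3 * t + 8 \<or> (\<exists>Z \<subseteq> G. card Z = t + 4 \<and> (\<forall>C\<in>T. C \<subseteq> Z))"
proof (cases "\<exists>e1\<in>base_pairs. \<exists>e2\<in>base_pairs. swaps2 e1 \<noteq> {} \<and> swaps2 e2 \<noteq> {} \<and> e1 \<inter> e2 = {}")
  case False
  then show ?thesis using card_le_if_supports_intersect[OF assms] by blast
next
  case True
  then obtain e1 e2 D0 where e12: "e1 \<in> base_pairs" "e2 \<in> base_pairs" "e1 \<inter> e2 = {}"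
    and D0: "D0 \<in> swaps2 e1" and "swaps2 e2 \<noteq> {}" by blast
  have same: "D = D'" if "D \<in> swaps2 e1" "D' \<in> swaps2 e2" for D D'
    using two_swaps_eq_if_disjoint[OF that] e12 by simp
  then have Dg_e12: "swaps2 e1 = {D0}" "swaps2 e2 = {D0}" using D0 \<open>swaps2 e2 \<noteq> {}\<close> by blast+
  show ?thesis
  proof (cases "\<forall>e\<in>base_pairs. swaps2 e \<subseteq> {D0}")
    case True
    have "A \<union> D0 \<subseteq> G" using base_subset member_subset two_swapsD(3)[OF D0] by blast
    moreover have "A \<inter> D0 = {}" using two_swapsD(2)[OF D0] by blast
    then have "card (A \<union> D0) = t + 4"
      using card_Un_disjoint[OF finite_base two_swapsD(4)[OF D0]] card_base two_swapsD(1)[OF D0]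
        by simp
    moreover have "\<forall>C\<in>T. C \<subseteq> A \<union> D0"
    proof
      fix C assume "C \<in> T"
      moreover have "D0 \<in> swaps2 e2" using Dg_e12 by simp
      moreover have "swaps2 e \<subseteq> {D0}" if "e \<in> base_pairs" for e using True that by blast
      ultimately show "C \<subseteq> A \<union> D0" using members_subset_if_unique_two_swap[OF e12 D0] by blast
    qed
    ultimately show ?thesis by blast
  next
    case False
    then obtain e D where eD: "e \<in> base_pairs" "D \<in> swaps2 e" "D \<noteq> D0" by blast
    obtain p1 p2 q1 q2 w1 w2 u where "crossing_configuration G t T A p1 p2 q1 q2 w1 w2 u"
      by (rule crossing_configuration_if_extra_two_swap[OF e12 Dg_e12 eD])
    then have "card T \<le> 3 * t + 8" by (rule crossing_configuration.card_le_three_t_plus_8)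
    then show ?thesis by blast
  qed
qed

end

section \<open>Minimum t-covers of maximal t-intersecting families\<close>

lemma tau_le_card_t_cover: "t_cover n t G S \<Longrightarrow> tau n t G \<le> card S"
  unfolding tau_def by (rule Least_le) blast

lemma Tcov_nonempty:
  assumes "t_cover n t G S"
  shows "Tcov n t G \<noteq> {}"
proof -
  have "\<exists>m S. t_cover n t G S \<and> card S = m" using assms by blast
  then have "\<exists>S. t_cover n t G S \<and> card S = tau n t G" unfolding tau_def by (rule LeastI_ex)
  then show ?thesis unfolding Tcov_def by blast
qed

lemma maximal_t_intersecting_superset_mem:
  assumes max: "maximal_t_intersecting n k t F" and "t \<le> k" "t_cover n t F S"
    and X: "X \<in> ksets {1..n} k" "S \<subseteq> X"
  shows "X \<in> F"
proof (rule ccontr)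
  assume "X \<notin> F"
  have "t \<le> card (X \<inter> Y)" if "Y \<in> F" for Y
  proof -
    have "t \<le> card (S \<inter> Y)" using assms(3) that unfolding t_cover_def by blast
    also have "\<dots> \<le> card (X \<inter> Y)"
      using X finite_subset[of X "{1..n}"] unfolding ksets_def by (intro card_mono) auto
    finally show ?thesis .
  qed
  then have "t_intersecting t (insert X F)"
    using max X(1) assms(2) unfolding maximal_t_intersecting_def t_intersecting_def ksets_def
    by (auto simp: Int_commute)
  moreover have "F \<subset> insert X F" "insert X F \<subseteq> ksets {1..n} k"
    using \<open>X \<notin> F\<close> X(1) max unfolding maximal_t_intersecting_def by auto
  ultimately show False using max unfolding maximal_t_intersecting_def by blast
qed

lemma maximal_t_intersecting_covers_intersect:
  assumes max: "maximal_t_intersecting n k t F" and "t \<le> k"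
    and S: "t_cover n t F S" "card S \<le> k" and S': "t_cover n t F S'" "k + card S' \<le> n"
  shows "t \<le> card (S \<inter> S')"
proof -
  have fin: "finite S" "finite S'"
    using S(1) S'(1) finite_subset unfolding t_cover_def by blast+
  let ?R = "{1..n} - (S \<union> S')"
  have "card ?R = n - card (S \<union> S')"
    using S(1) S'(1) unfolding t_cover_def by (simp add: card_Diff_subset fin)
  moreover have "card (S \<union> S') \<le> card S + card S'" by (rule card_Un_le)
  ultimately have "k - card S \<le> card ?R" using S'(2) by linarith
  then obtain R where R: "R \<subseteq> ?R" "card R = k - card S" "finite R"
    by (meson obtain_subset_with_card_n)
  have "S \<inter> R = {}" using R(1) by blast
  then have "S \<union> R \<in> ksets {1..n} k"
    using S R card_Un_disjoint[OF fin(1) R(3)] unfolding ksets_def t_cover_def by auto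
  then have "S \<union> R \<in> F" using maximal_t_intersecting_superset_mem[OF max assms(2) S(1)] by blast
  then have "t \<le> card (S' \<inter> (S \<union> R))" using S'(1) unfolding t_cover_def by blast
  moreover have "S' \<inter> (S \<union> R) = S \<inter> S'" using R(1) by blast
  ultimately show ?thesis by simp
qed

lemma tight_family_Tcov:
  assumes "n > 2 * k" "k \<ge> t + 3" "0 < t"
    and max: "maximal_t_intersecting n k t F"
    and "tau n t F = t + 2" "tau n t (Tcov n t F) = t + 2"
  shows "tight_family {1..n} t (Tcov n t F)"
proof
  fix C C' assume C: "C \<in> Tcov n t F" and C': "C' \<in> Tcov n t F"
  then show "C \<subseteq> {1..n}" "card C = t + 2"
    using assms(5) unfolding Tcov_def t_cover_def by auto
  show "t \<le> card (C \<inter> C')"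
    using maximal_t_intersecting_covers_intersect[OF max] C C' assms(1,2,5)
    unfolding Tcov_def by auto
next
  fix S assume "S \<subseteq> {1..n}" "card S = t + 1"
  then have "\<not> t_cover n t (Tcov n t F) S" using tau_le_card_t_cover assms(6) by fastforce
  then show "\<exists>C\<in>Tcov n t F. card (S \<inter> C) < t"
    using \<open>S \<subseteq> {1..n}\<close> unfolding t_cover_def by (auto simp: not_le)
qed (use assms(3) in simp_all)

lemma card_le_choose_if_subset_ksets:
  assumes "finite Z" "T \<subseteq> ksets Z m"
  shows "card T \<le> card Z choose m" and "card T = card Z choose m \<Longrightarrow> T = ksets Z m"
proof -
  have "finite (ksets Z m)" "card (ksets Z m) = card Z choose m"
    using assms(1) n_subsets[OF assms(1)] unfolding ksets_def by simp_all
  then show "card T \<le> card Z choose m" "card T = card Z choose m \<Longrightarrow> T = ksets Z m"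
    using card_mono card_subset_eq assms(2) by metis+
qed

lemma t_cover_ground:
  assumes "maximal_t_intersecting n k t F" "t \<le> k"
  shows "t_cover n t F {1..n}"
  unfolding t_cover_def
proof (intro conjI ballI)
  fix X assume "X \<in> F"
  then have "X \<subseteq> {1..n}" "card X = k"
    using assms(1) unfolding maximal_t_intersecting_def ksets_def by auto
  then show "t \<le> card ({1..n} \<inter> X)" using assms(2) by (simp add: Int_absorb1)
qed simp

lemma three_t_plus_8_less_choose:
  assumes "2 \<le> t"
  shows "3 * t + 8 < (t + 4) choose 2"
proof -
  have "4 \<le> t * t" using mult_le_mono[OF assms assms] by simp
  then have "(3 * t + 9) * 2 \<le> (t + 4) * (t + 3)" using assms by (simp add: algebra_simps)
  then have "3 * t + 9 \<le> (t + 4) * (t + 3) div 2" by (simp add: less_eq_div_iff_mult_less_eq)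
  then show ?thesis by (simp add: choose_two add.commute)
qed

lemma card_tight_family_le_choose:
  assumes "tight_family_base {1..n} t T A" "2 \<le> t"
  shows "card T \<le> (t + 4) choose 2 \<and>
    (card T = (t + 4) choose 2 \<longrightarrow> (\<exists>Z \<in> ksets {1..n} (t + 4). T = ksets Z (t + 2)))"
proof -
  interpret tight_family_base "{1..n}" t T A by (rule assms(1))
  from card_le_or_members_in_t_plus_4_set[OF assms(2)] show ?thesis
  proof
    assume "card T \<le> 3 * t + 8"
    then show ?thesis using three_t_plus_8_less_choose[OF assms(2)] by simp
  next
    assume "\<exists>Z \<subseteq> {1..n}. card Z = t + 4 \<and> (\<forall>C\<in>T. C \<subseteq> Z)"
    then obtain Z where Z: "Z \<subseteq> {1..n}" "card Z = t + 4" "\<forall>C\<in>T. C \<subseteq> Z" by blast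
    then have "finite Z" using finite_subset by blast
    moreover have "T \<subseteq> ksets Z (t + 2)" using Z member_card unfolding ksets_def by auto
    moreover have "card Z choose (t + 2) = (t + 4) choose 2"
      using Z(2) binomial_symmetric[of 2 "t + 4"] by simp
    ultimately have "card T \<le> (t + 4) choose 2" "card T = (t + 4) choose 2 \<Longrightarrow> T = ksets Z (t + 2)"
      using card_le_choose_if_subset_ksets by metis+
    moreover have "Z \<in> ksets {1..n} (t + 4)" using Z unfolding ksets_def by simp
    ultimately show ?thesis by blast
  qed
qed

theorem proposition2p10:
  fixes n k t :: nat and F :: "nat set set"
  assumes "n > 2 * k" and "k \<ge> t + 3"
    and "maximal_t_intersecting n k t F"
    and "tau n t F = t + 2"
    and "tau n t (Tcov n t F) = t + 2"
  shows "(t = 1 \<longrightarrow> card (Tcov n t F) < (k - t) * (k - t + 1) + 1)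
       \<and> (t \<ge> 2 \<longrightarrow>
            card (Tcov n t F) \<le> (t + 4) choose 2 \<and>
            (card (Tcov n t F) = (t + 4) choose 2 \<longrightarrow>
               (\<exists>Z \<in> ksets {1..n} (t + 4). Tcov n t F = ksets Z (t + 2))))"
proof (cases "t = 0")
  case False
  let ?T = "Tcov n t F"
  have "tight_family {1..n} t ?T" by (rule tight_family_Tcov) (use assms False in auto)
  moreover have "?T \<noteq> {}" using Tcov_nonempty t_cover_ground[OF assms(3)] assms(2) by simp
  ultimately obtain A where base: "tight_family_base {1..n} t ?T A"
    by (meson all_not_in_conv tight_family_base.intro tight_family_base_axioms.intro)
  have "card ?T < (k - t) * (k - t + 1) + 1" if "t = 1"
  proof -
    have "3 * 4 \<le> (k - t) * (k - t + 1)" using assms(2) that by (intro mult_le_mono) auto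
    then show ?thesis using tight_family_base.card_le_12[OF base that] by linarith
  qed
  then show ?thesis using card_tight_family_le_choose[OF base] by blast
qed simp

end
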